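(* Let $X,X',Y,Y'$ be slices, $S:X\to X'$ and $T:Y\to Y'$ morphisms of $\mathsf{Slice}$. Define, for each slice $Z$, maps $(S\wedge Y)_Z:(X\wedge Y)(Z)\to(X'\wedge Y)(Z)$, $C\mapsto C\cap S$, and $(X\wedge T)_Z:(X\wedge Y)(Z)\to(X\wedge Y')(Z)$, $C\mapsto C\cap T$ (and analogously $(S\wedge Y')_Z$, $(X'\wedge T)_Z$). Then $(S\wedge Y)$ and $(X\wedge T)$ are natural transformations of presheaves on $\mathsf{Slice}$, and for every slice $Z$, $(S\wedge Y')_Z\circ(X\wedge T)_Z=(X'\wedge T)_Z\circ(S\wedge Y)_Z$.
   Context: Fix a connected, time-orientable Lorentzian manifold $\mathcal{M}$ with a fixed time-orientation (no further causality assumptions). A causal curve is an equivalence class, up to monotone reparametrisation, of smooth regular paths $\mu:\iota\to\mathcal{M}$ ($\iota\subseteq\mathbb{R}$ an interval) whose tangent is everywhere timelike or null; it is future-directed if the tangent is everywhere future-directed. Write $x\prec y$ if $x=y$ or there is a future-directed causal curve from $x$ to $y$. A region $A\subseteq\mathcal{M}$ is spacelike if no two distinct points $x,y\in A$ satisfy $x\prec y$. A slice is a closed spacelike subset of $\mathcal{M}$. For regions $A,B$, $\mathcal{C}[A,B]$ is the set of future-directed causal curves passing through $A$ and then $B$: for a representative path $\mu:\iota\to\mathcal{M}$, there exists $q\in\iota$ with $\mu(q)\in B$, and for every such $q$ there exists $p\le q$ with $\mu(p)\in A$. The category $\mathsf{Slice}$ has slices as objects, $\mathsf{Slice}(X,Y)=\mathcal{P}(\mathcal{C}[X,Y])$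 (the powerset), composition $T\circ S:=T\cap S$, identities $1_X=\mathcal{C}[X,X]$. For slices $X,Y$, the presheaf $(X\wedge Y)(-):\mathsf{Slice}^{op}\to\mathsf{Set}$ is defined by $(X\wedge Y)(Z):=\mathcal{P}(\mathcal{C}[Z,X]\cap\mathcal{C}[Z,Y])$ and, for $U:Z'\to Z$, $(X\wedge Y)(U):C\mapsto C\cap U$. *)

theory Defs
  imports "HOL-Analysis.Analysis"
begin

type_synonym 'm path = "(real \<Rightarrow> 'm) \<times> real set"
(* A causal curve is an equivalence class of paths. *)
type_synonym 'm curve = "'m path set"

(* Abstract spacetime data: a topology on the points and the set P of
   (representative paths of) future-directed causal paths. *)
definition causal_data :: "'m topology \<Rightarrow> 'm path set \<Rightarrow> bool" where
  "causal_data Tp P \<longleftrightarrow>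
     (\<forall>(\<mu>,\<iota>)\<in>P. is_interval \<iota> \<and> \<iota> \<noteq> {} \<and>
        continuous_map (top_of_set \<iota>) Tp \<mu>)"

definition reparam_equiv :: "'m path set \<Rightarrow> ('m path \<times> 'm path) set" where
  "reparam_equiv P = {((\<mu>,\<iota>),(\<nu>,\<kappa>)). (\<mu>,\<iota>) \<in> P \<and> (\<nu>,\<kappa>) \<in> P \<and>
      (\<exists>\<phi>. bij_betw \<phi> \<kappa> \<iota> \<and> strict_mono_on \<kappa> \<phi> \<and> (\<forall>t\<in>\<kappa>. \<nu> t = \<mu> (\<phi> t)))}"

definition curves :: "'m path set \<Rightarrow> 'm curve set" where
  "curves P = P // reparam_equiv P"

definition causal_prec :: "'m path set \<Rightarrow> 'm \<Rightarrow> 'm \<Rightarrow> bool" where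
  "causal_prec P x y \<longleftrightarrow> x = y \<or>
     (\<exists>(\<mu>,\<iota>)\<in>P. \<exists>p\<in>\<iota>. \<exists>q\<in>\<iota>. p \<le> q \<and> \<mu> p = x \<and> \<mu> q = y)"

definition spacelike :: "'m path set \<Rightarrow> 'm set \<Rightarrow> bool" where
  "spacelike P A \<longleftrightarrow> (\<forall>x\<in>A. \<forall>y\<in>A. x \<noteq> y \<longrightarrow> \<not> causal_prec P x y)"

definition slice :: "'m topology \<Rightarrow> 'm path set \<Rightarrow> 'm set \<Rightarrow> bool" where
  "slice Tp P A \<longleftrightarrow> closedin Tp A \<and> spacelike P A"

definition passes :: "'m set \<Rightarrow> 'm set \<Rightarrow> 'm path \<Rightarrow> bool" where
  "passes A B r \<longleftrightarrow> (\<exists>q\<in>snd r. fst r q \<in> B) \<and>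
     (\<forall>q\<in>snd r. fst r q \<in> B \<longrightarrow> (\<exists>p\<in>snd r. p \<le> q \<and> fst r p \<in> A))"

definition CC :: "'m path set \<Rightarrow> 'm set \<Rightarrow> 'm set \<Rightarrow> 'm curve set" where
  "CC P A B = {c \<in> curves P. \<forall>r\<in>c. passes A B r}"

definition slice_hom :: "'m path set \<Rightarrow> 'm set \<Rightarrow> 'm set \<Rightarrow> 'm curve set set" where
  "slice_hom P X Y = Pow (CC P X Y)"

definition wedge :: "'m path set \<Rightarrow> 'm set \<Rightarrow> 'm set \<Rightarrow> 'm set \<Rightarrow> 'm curve set set" where
  "wedge P X Y Z = Pow (CC P Z X \<inter> CC P Z Y)"

(* action of (X \<and> Y) on U : Z' \<rightarrow> Z *)
definition wedge_map :: "'m curve set \<Rightarrow> 'm curve set \<Rightarrow> 'm curve set" where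
  "wedge_map U C = C \<inter> U"

(* natural transformation alpha : F \<Rightarrow> G between presheaves on a category with
   object set Ob, hom-sets Hom Z' Z, presheaf object parts F, G and arrow
   parts Fm Z' Z U : F Z \<rightarrow> F Z' (for U : Z' \<rightarrow> Z). *)
definition presheaf_nat_trans ::
  "'o set \<Rightarrow> ('o \<Rightarrow> 'o \<Rightarrow> 'h set) \<Rightarrow>
   ('o \<Rightarrow> 'x set) \<Rightarrow> ('o \<Rightarrow> 'o \<Rightarrow> 'h \<Rightarrow> 'x \<Rightarrow> 'x) \<Rightarrow>
   ('o \<Rightarrow> 'y set) \<Rightarrow> ('o \<Rightarrow> 'o \<Rightarrow> 'h \<Rightarrow> 'y \<Rightarrow> 'y) \<Rightarrow>
   ('o \<Rightarrow> 'x \<Rightarrow> 'y) \<Rightarrow> bool" where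
  "presheaf_nat_trans Ob Hom F Fm G Gm \<alpha> \<longleftrightarrow>
     (\<forall>Z\<in>Ob. \<forall>C\<in>F Z. \<alpha> Z C \<in> G Z) \<and>
     (\<forall>Z\<in>Ob. \<forall>Z'\<in>Ob. \<forall>U\<in>Hom Z' Z. \<forall>C\<in>F Z. \<alpha> Z' (Fm Z' Z U C) = Gm Z' Z U (\<alpha> Z C))"

end

theory Submission
  imports Defs
begin

(* Everything rests on one fact: a curve that passes through A and then B, and through B
   and then D, passes through A and then D, so that intersecting with a morphism S : X \<rightarrow> X'
   maps (X \<and> Y)(Z) into (X' \<and> Y)(Z).  Naturality and the interchange law are then
   associativity and commutativity of intersection. *)

lemma passes_trans: "passes A B r \<Longrightarrow> passes B D r \<Longrightarrow> passes A D r"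
  unfolding passes_def by (meson order_trans)

lemma CC_trans: "c \<in> CC P A B \<Longrightarrow> c \<in> CC P B D \<Longrightarrow> c \<in> CC P A D"
  unfolding CC_def using passes_trans by blast

lemma wedge_commute: "wedge P X Y = wedge P Y X"
  unfolding wedge_def by (simp add: Int_commute)

lemma Int_slice_hom_in_wedge:
  assumes "C \<in> wedge P X Y Z" and "S \<in> slice_hom P X X'"
  shows "C \<inter> S \<in> wedge P X' Y Z"
  using assms CC_trans unfolding wedge_def slice_hom_def by blast

lemma presheaf_nat_trans_Int_slice_hom:
  assumes "S \<in> slice_hom P X X'"
  shows "presheaf_nat_trans Ob Hom (wedge P X Y) (\<lambda>Z' Z. wedge_map)
           (wedge P X' Y) (\<lambda>Z' Z. wedge_map) (\<lambda>Z C. C \<inter> S)"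
proof -
  have "wedge_map U C \<inter> S = wedge_map U (C \<inter> S)" for U C :: "'a curve set"
    unfolding wedge_map_def by blast
  moreover have "C \<inter> S \<in> wedge P X' Y Z" if "C \<in> wedge P X Y Z" for C Z
    using Int_slice_hom_in_wedge[OF that assms] .
  ultimately show ?thesis
    unfolding presheaf_nat_trans_def by simp
qed

theorem mainTheorem5:
  fixes Tp :: "'m topology" and P :: "'m path set"
    and X X' Y Y' :: "'m set" and S T :: "'m curve set"
  assumes "causal_data Tp P"
    and "slice Tp P X" and "slice Tp P X'" and "slice Tp P Y" and "slice Tp P Y'"
    and "S \<in> slice_hom P X X'" and "T \<in> slice_hom P Y Y'"
  shows "presheaf_nat_trans {Z. slice Tp P Z} (slice_hom P)
           (wedge P X Y) (\<lambda>Z' Z. wedge_map) (wedge P X' Y) (\<lambda>Z' Z. wedge_map)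
           (\<lambda>Z C. C \<inter> S)
       \<and> presheaf_nat_trans {Z. slice Tp P Z} (slice_hom P)
           (wedge P X Y) (\<lambda>Z' Z. wedge_map) (wedge P X Y') (\<lambda>Z' Z. wedge_map)
           (\<lambda>Z C. C \<inter> T)
       \<and> (\<forall>Z. slice Tp P Z \<longrightarrow>
           (\<forall>C\<in>wedge P X Y Z. ((\<lambda>C. C \<inter> S) \<circ> (\<lambda>C. C \<inter> T)) C
                              = ((\<lambda>C. C \<inter> T) \<circ> (\<lambda>C. C \<inter> S)) C))"
proof -
  have left: "presheaf_nat_trans {Z. slice Tp P Z} (slice_hom P)
           (wedge P X Y) (\<lambda>Z' Z. wedge_map) (wedge P X' Y) (\<lambda>Z' Z. wedge_map)
           (\<lambda>Z C. C \<inter> S)"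
    using presheaf_nat_trans_Int_slice_hom[OF assms(6)] .
  have "presheaf_nat_trans {Z. slice Tp P Z} (slice_hom P)
           (wedge P Y X) (\<lambda>Z' Z. wedge_map) (wedge P Y' X) (\<lambda>Z' Z. wedge_map)
           (\<lambda>Z C. C \<inter> T)"
    using presheaf_nat_trans_Int_slice_hom[OF assms(7)] .
  then have right: "presheaf_nat_trans {Z. slice Tp P Z} (slice_hom P)
           (wedge P X Y) (\<lambda>Z' Z. wedge_map) (wedge P X Y') (\<lambda>Z' Z. wedge_map)
           (\<lambda>Z C. C \<inter> T)"
    by (simp only: wedge_commute[of P Y] wedge_commute[of P Y'])
  show ?thesis
    using left right by (auto simp: Int_ac)
qed

end
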